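(* Let $m \ge 1$ and $n \ge 2m$ be integers. Then for every real $r$ with $|r|<1$, $$\int_{-1}^1 \frac{T_n(s)(1-s^2)^{m-\frac{1}{2}}}{s-r}\,ds = \pi(-1)^{m+1}\left(\frac{1}{2}\right)^{2m-1}\sum_{j=0}^{2m-1}(-1)^j\binom{2m-1}{j}T_{n+1-2m+2j}(r),$$ where the integral is a Cauchy principal-value integral.
   Context: $T_k$ denotes the Tchebyshev polynomial of the first kind, $T_k(s)=\cos(k\cos^{-1}s)$, $k=0,1,2,\dots$. The integral over $(-1,1)$ with the singular point $s=r\in(-1,1)$ is understood in the Cauchy principal-value sense. $\binom{a}{j}=\frac{a!}{j!(a-j)!}$. *)

theory Defs
  imports "HOL-Analysis.Analysis"
begin

definition cheb_T :: "nat \<Rightarrow> real \<Rightarrow> real" where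
  "cheb_T k s = cos (real k * arccos s)"

definition has_cpv_integral :: "(real \<Rightarrow> real) \<Rightarrow> real \<Rightarrow> real \<Rightarrow> real \<Rightarrow> real \<Rightarrow> bool" where
  "has_cpv_integral f a b c I \<longleftrightarrow>
     (\<forall>\<^sub>F e in at_right 0. f integrable_on {a..c-e} \<and> f integrable_on {c+e..b}) \<and>
     ((\<lambda>e. integral {a..c-e} f + integral {c+e..b} f) \<longlongrightarrow> I) (at_right 0)"

end

(* For m = 1, write J n for the principal value of T_n(s) sqrt(1 - s^2) / (s - r).
   From T_(n+2)(s) = 2 s T_(n+1)(s) - T_n(s) and s / (s - r) = 1 + r / (s - r) one gets
   J (n+2) = 2 K (n+1) + 2 r J (n+1) - J n, where K n, the ordinary integral of
   T_n(s) sqrt(1 - s^2), vanishes for n >= 3.  Starting from J 0 = -pi r, computed with an explicit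
   antiderivative, this gives J n = pi/2 (T_(n-1)(r) - T_(n+1)(r)) for n >= 2.
   Passing from m to m + 1 multiplies the integrand by 1 - s^2, and
   (1 - s^2) T_(n+2) = (2 T_(n+2) - T_(n+4) - T_n) / 4 reduces one case of m + 1 to three cases of m;
   applying Pascal's rule twice turns the resulting combination of alternating binomial sums into
   the claimed one. *)

theory Submission
  imports Defs
begin

lemma has_cpv_integral_add:
  assumes "has_cpv_integral f a b c I" "has_cpv_integral g a b c J"
  shows "has_cpv_integral (\<lambda>s. f s + g s) a b c (I + J)"
proof -
  obtain f_int: "\<forall>\<^sub>F e in at_right 0. f integrable_on {a..c-e} \<and> f integrable_on {c+e..b}"
    and g_int: "\<forall>\<^sub>F e in at_right 0. g integrable_on {a..c-e} \<and> g integrable_on {c+e..b}"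
    using assms unfolding has_cpv_integral_def by blast
  note ev = eventually_conj[OF f_int g_int]
  have "((\<lambda>e. (integral {a..c-e} f + integral {c+e..b} f) + (integral {a..c-e} g + integral {c+e..b} g))
          \<longlongrightarrow> I + J) (at_right 0)"
    using assms unfolding has_cpv_integral_def by (intro tendsto_add) auto
  moreover have "\<forall>\<^sub>F e in at_right 0.
      (integral {a..c-e} f + integral {c+e..b} f) + (integral {a..c-e} g + integral {c+e..b} g) =
      integral {a..c-e} (\<lambda>s. f s + g s) + integral {c+e..b} (\<lambda>s. f s + g s)"
    using ev by eventually_elim (simp add: integral_add)
  ultimately have "((\<lambda>e. integral {a..c-e} (\<lambda>s. f s + g s) + integral {c+e..b} (\<lambda>s. f s + g s))
                     \<longlongrightarrow> I + J) (at_right 0)"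
    by (rule tendsto_cong[THEN iffD1, rotated])
  moreover have "\<forall>\<^sub>F e in at_right 0. (\<lambda>s. f s + g s) integrable_on {a..c-e} \<and>
                                      (\<lambda>s. f s + g s) integrable_on {c+e..b}"
    using ev by eventually_elim (auto intro: integrable_add)
  ultimately show ?thesis unfolding has_cpv_integral_def by blast
qed

lemma has_cpv_integral_cmult:
  assumes "has_cpv_integral f a b c I"
  shows "has_cpv_integral (\<lambda>s. k * f s) a b c (k * I)"
proof -
  have "((\<lambda>e. k * (integral {a..c-e} f + integral {c+e..b} f)) \<longlongrightarrow> k * I) (at_right 0)"
    using assms unfolding has_cpv_integral_def by (intro tendsto_mult) auto
  then show ?thesis
    using assms unfolding has_cpv_integral_def
    by (auto elim!: eventually_mono simp: distrib_left integrable_on_mult_right)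
qed

lemma has_cpv_integral_cong:
  assumes "has_cpv_integral f a b c I" "a \<le> c" "c \<le> b"
    and "\<And>s. s \<in> {a..b} \<Longrightarrow> s \<noteq> c \<Longrightarrow> f s = g s"
  shows "has_cpv_integral g a b c I"
proof -
  have eq: "integral {a..c-e} f = integral {a..c-e} g" "integral {c+e..b} f = integral {c+e..b} g"
    "f integrable_on {a..c-e} \<longleftrightarrow> g integrable_on {a..c-e}"
    "f integrable_on {c+e..b} \<longleftrightarrow> g integrable_on {c+e..b}" if "e > 0" for e
    using that assms(2,3) by (auto intro!: integral_cong integrable_cong assms(4))
  have pos: "\<forall>\<^sub>F e in at_right (0::real). e > 0" by (rule eventually_at_right_less)
  have "\<forall>\<^sub>F e in at_right 0. g integrable_on {a..c-e} \<and> g integrable_on {c+e..b}"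
    using assms(1) pos unfolding has_cpv_integral_def by (auto elim: eventually_elim2 simp: eq)
  moreover have "((\<lambda>e. integral {a..c-e} g + integral {c+e..b} g) \<longlongrightarrow> I) (at_right 0)"
    using assms(1) pos unfolding has_cpv_integral_def
    by (auto elim!: eventually_mono tendsto_cong[THEN iffD1, rotated] simp: eq)
  ultimately show ?thesis unfolding has_cpv_integral_def ..
qed

lemma has_integral_imp_has_cpv_integral:
  assumes f: "(f has_integral I) {a..b}" and c: "a < c" "c < b"
  shows "has_cpv_integral f a b c I"
proof -
  have int: "f integrable_on {a..b}" using f by blast
  have ev: "\<forall>\<^sub>F e in at_right 0. e \<in> {0<..<min (c-a) (b-c)}"
    by (rule eventually_at_right_real) (use c in auto)
  have "isCont (\<lambda>x. integral {a..x} f) c" "isCont (\<lambda>x. integral {x..b} f) c"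
    using c indefinite_integral_continuous_1[OF int] indefinite_integral_continuous_1'[OF int]
    by (auto intro!: continuous_on_interior simp: interior_atLeastAtMost_real)
  then have "((\<lambda>e. integral {a..c-e} f) \<longlongrightarrow> integral {a..c} f) (at_right 0)"
    and "((\<lambda>e. integral {c+e..b} f) \<longlongrightarrow> integral {c..b} f) (at_right 0)"
    by (auto elim!: isCont_tendsto_compose intro!: tendsto_eq_intros)
  then have "((\<lambda>e. integral {a..c-e} f + integral {c+e..b} f)
               \<longlongrightarrow> integral {a..c} f + integral {c..b} f) (at_right 0)"
    by (rule tendsto_add)
  moreover have "integral {a..c} f + integral {c..b} f = I"
    using c Henstock_Kurzweil_Integration.integral_combine[OF _ _ int] integral_unique[OF f] by simp
  moreover have "\<forall>\<^sub>F e in at_right 0. f integrable_on {a..c-e} \<and> f integrable_on {c+e..b}"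
    using ev by eventually_elim (auto intro: integrable_subinterval_real[OF int])
  ultimately show ?thesis unfolding has_cpv_integral_def by simp
qed

lemma has_cpv_integral_antiderivative:
  assumes c: "a < c" "c < b"
    and F_cont: "continuous_on ({a..b} - {c}) F"
    and F_deriv: "\<And>s. s \<in> {a<..<b} - {c} \<Longrightarrow> (F has_real_derivative f s) (at s)"
    and F_jump: "((\<lambda>e. F (c - e) - F (c + e)) \<longlongrightarrow> L) (at_right 0)"
  shows "has_cpv_integral f a b c (F b - F a + L)"
proof -
  have ftc: "(f has_integral F v - F u) {u..v}" if "a \<le> u" "u \<le> v" "v \<le> b" "c \<notin> {u..v}" for u v
    using that
    by (intro fundamental_theorem_of_calculus_interior continuous_on_subset[OF F_cont])
       (auto intro!: F_deriv simp: has_real_derivative_iff_has_vector_derivative[symmetric])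
  have ev: "\<forall>\<^sub>F e in at_right 0. e \<in> {0<..<min (c-a) (b-c)}"
    by (rule eventually_at_right_real) (use c in auto)
  then have "\<forall>\<^sub>F e in at_right 0. (f has_integral F (c-e) - F a) {a..c-e} \<and>
                                 (f has_integral F b - F (c+e)) {c+e..b}"
    by eventually_elim (auto intro!: ftc)
  moreover have "((\<lambda>e. (F (c-e) - F a) + (F b - F (c+e))) \<longlongrightarrow> F b - F a + L) (at_right 0)"
    using tendsto_add[OF F_jump tendsto_const[of "F b - F a"]] by (simp add: algebra_simps)
  ultimately show ?thesis
    unfolding has_cpv_integral_def
    by (auto elim!: eventually_mono tendsto_cong[THEN iffD1, rotated] simp: integral_unique)
qed

lemma cheb_T_0 [simp]: "cheb_T 0 s = 1"
  by (simp add: cheb_T_def)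

lemma cheb_T_Suc_0: "\<bar>s\<bar> \<le> 1 \<Longrightarrow> cheb_T (Suc 0) s = s"
  by (simp add: cheb_T_def)

lemma cheb_T_Suc_Suc:
  assumes "\<bar>s\<bar> \<le> 1"
  shows "cheb_T (Suc (Suc n)) s = 2 * s * cheb_T (Suc n) s - cheb_T n s"
proof -
  define t where "t = arccos s"
  have "cos t = s" using assms by (simp add: t_def)
  moreover have "cos (real (Suc (Suc n)) * t) = 2 * cos t * cos (real (Suc n) * t) - cos (real n * t)"
    using cos_add[of "real (Suc n) * t" t] cos_diff[of "real (Suc n) * t" t]
    by (simp add: algebra_simps)
  ultimately show ?thesis by (simp add: cheb_T_def t_def)
qed

lemma one_minus_sq_mult_cheb_T:
  assumes "\<bar>s\<bar> \<le> 1"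
  shows "(1 - s\<^sup>2) * cheb_T (n + 2) s = (2 * cheb_T (n + 2) s - cheb_T (n + 4) s - cheb_T n s) / 4"
  using assms by (simp add: eval_nat_numeral cheb_T_Suc_Suc algebra_simps power2_eq_square)

lemma has_integral_cheb_T_sqrt_by_arccos:
  assumes H: "\<And>t. (H has_real_derivative cos (real n * t) * (sin t)\<^sup>2) (at t)"
  shows "((\<lambda>s. cheb_T n s * sqrt (1 - s\<^sup>2)) has_integral H pi - H 0) {-1..1}"
proof -
  have "continuous_on UNIV H"
    using H by (meson DERIV_isCont continuous_at_imp_continuous_on)
  then have cont: "continuous_on {-1..1} (\<lambda>s. - H (arccos s))"
    by (auto intro!: continuous_intros continuous_on_compose2[of UNIV H])
  have "((\<lambda>s. - H (arccos s)) has_real_derivative cheb_T n s * sqrt (1 - s\<^sup>2)) (at s)"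
    if "s \<in> {-1<..<1}" for s
  proof -
    define q where "q = sqrt (1 - s\<^sup>2)"
    have q: "q > 0" "q\<^sup>2 = 1 - s\<^sup>2" "sin (arccos s) = q"
      using that by (auto simp: q_def sin_arccos abs_square_less_1 abs_square_le_1)
    have "((\<lambda>s. H (arccos s)) has_real_derivative
            cos (real n * arccos s) * (sin (arccos s))\<^sup>2 * inverse (- q)) (at s)"
      unfolding q_def by (rule DERIV_chain2[OF H DERIV_arccos]) (use that in auto)
    moreover have "- (cos (real n * arccos s) * (sin (arccos s))\<^sup>2 * inverse (- q)) = cheb_T n s * q"
      using q by (simp add: cheb_T_def field_simps power2_eq_square)
    ultimately show ?thesis
      unfolding q_def by (metis DERIV_minus)
  qed
  then show ?thesis
    using fundamental_theorem_of_calculus_interior[OF _ cont]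
    by (simp add: has_real_derivative_iff_has_vector_derivative)
qed

lemma has_integral_cheb_T_sqrt:
  "((\<lambda>s. cheb_T n s * sqrt (1 - s\<^sup>2)) has_integral
      (if n = 0 then pi/2 else if n = 2 then -pi/4 else 0)) {-1..1}"
proof -
  define P :: "real \<Rightarrow> real \<Rightarrow> real" where "P k = (if k = 0 then (\<lambda>t. t) else (\<lambda>t. sin (k * t) / k))" for k
  have P_deriv: "(P k has_real_derivative cos (k * t)) (at t)" for k t
    by (cases "k = 0") (auto simp: P_def intro!: derivative_eq_intros)
  have P_int: "P (of_int i) pi - P (of_int i) 0 = (if i = 0 then pi else 0)" for i :: int
    using sin_zero_iff_int2[of "of_int i * pi"] by (auto simp: P_def)
  define H where "H t = P (real n) t / 2 - P (real n + 2) t / 4 - P (real n - 2) t / 4" for t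
  have "(H has_real_derivative cos (real n * t) * (sin t)\<^sup>2) (at t)" for t
  proof -
    have sin_sq: "(sin t)\<^sup>2 = (1 - cos (2 * t)) / 2"
      using cos_double_sin[of t] by simp
    have "cos ((real n + 2) * t) + cos ((real n - 2) * t) = 2 * cos (real n * t) * cos (2 * t)"
      using cos_add[of "real n * t" "2 * t"] cos_diff[of "real n * t" "2 * t"]
      by (simp add: algebra_simps)
    then have "cos (real n * t) / 2 - cos ((real n + 2) * t) / 4 - cos ((real n - 2) * t) / 4 =
               cos (real n * t) * (sin t)\<^sup>2"
      unfolding sin_sq by algebra
    then show ?thesis
      unfolding H_def by (auto intro!: derivative_eq_intros P_deriv)
  qed
  then have "((\<lambda>s. cheb_T n s * sqrt (1 - s\<^sup>2)) has_integral H pi - H 0) {-1..1}"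
    by (rule has_integral_cheb_T_sqrt_by_arccos)
  moreover have "H pi - H 0 = (if n = 0 then pi/2 else if n = 2 then -pi/4 else 0)"
    using P_int[of "int n"] P_int[of "int n + 2"] P_int[of "int n - 2"]
    by (auto simp: H_def algebra_simps)
  ultimately show ?thesis by simp
qed

lemma sqrt_antiderivative_identity:
  fixes p q r s :: real
  assumes "p\<^sup>2 = 1 - r\<^sup>2" "q\<^sup>2 = 1 - s\<^sup>2"
  shows "(p - q) * (1 - r * s + p * q) = (r * q + p * s) * (s - r)"
  using assms by algebra

lemma DERIV_ln_abs:
  assumes "x \<noteq> (0::real)"
  shows "((\<lambda>x. ln \<bar>x\<bar>) has_real_derivative 1 / x) (at x)"
proof (cases "x > 0")
  case True
  show ?thesis
    by (rule has_field_derivative_transform_within_open[OF DERIV_ln_divide[OF True], of "{0<..}"])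
       (use True in auto)
next
  case False
  with assms have "x < 0" by simp
  have "((\<lambda>x. ln (- x)) has_real_derivative 1 / x) (at x)"
    using \<open>x < 0\<close> by (auto intro!: derivative_eq_intros)
  then show ?thesis
    by (rule has_field_derivative_transform_within_open[of _ _ _ "{..<0}"])
       (use \<open>x < 0\<close> in auto)
qed

lemma has_cpv_integral_sqrt_one_minus_sq:
  assumes r: "\<bar>r\<bar> < 1"
  shows "has_cpv_integral (\<lambda>s. sqrt (1 - s\<^sup>2) / (s - r)) (-1) 1 r (- pi * r)"
proof -
  define p where "p = sqrt (1 - r\<^sup>2)"
  define N where "N s = 1 - r * s + p * sqrt (1 - s\<^sup>2)" for s
  define G where "G s = sqrt (1 - s\<^sup>2) - r * arcsin s - p * ln (N s)" for s
  have p: "p > 0" "p\<^sup>2 = 1 - r\<^sup>2"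
    using r by (auto simp: p_def abs_square_less_1 abs_square_le_1)
  have N_pos: "N s > 0" if "\<bar>s\<bar> \<le> 1" for s
  proof -
    have "\<bar>r * s\<bar> < 1"
      using r that mult_left_le[of "\<bar>s\<bar>" "\<bar>r\<bar>"] by (simp add: abs_mult)
    moreover have "p * sqrt (1 - s\<^sup>2) \<ge> 0"
      using p that by (simp add: abs_square_le_1)
    ultimately show ?thesis by (simp add: N_def)
  qed
  have G_deriv: "(G has_real_derivative sqrt (1 - s\<^sup>2) / (s - r) - p / (s - r)) (at s)"
    if "s \<in> {-1<..<1} - {r}" for s
  proof -
    define q where "q = sqrt (1 - s\<^sup>2)"
    have q: "q > 0" "q\<^sup>2 = 1 - s\<^sup>2"
      using that by (auto simp: q_def abs_square_less_1 abs_square_le_1)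
    have sr: "s - r \<noteq> 0" and Ns: "N s > 0"
      using that N_pos[of s] by auto
    have "(G has_real_derivative (- s / q - r / q - p * (- r - p * s / q) / N s)) (at s)"
      unfolding G_def using that q Ns unfolding N_def
      by (auto intro!: derivative_eq_intros simp: q_def field_simps power2_eq_square)
    moreover have "- s / q - r / q - p * (- r - p * s / q) / N s = q / (s - r) - p / (s - r)"
    proof -
      have "(p - q) * N s = (r * q + p * s) * (s - r)"
        unfolding N_def q_def[symmetric] by (rule sqrt_antiderivative_identity[OF p(2) q(2)])
      then have h: "(r * q + p * s) / N s = (p - q) / (s - r)"
        using Ns sr by (simp add: field_simps)
      have "- s / q - r / q - p * (- r - p * s / q) / N s = (p * ((r * q + p * s) / N s) - (s + r)) / q"
        using q(1) Ns by (simp add: field_simps)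
      also have "\<dots> = (p * (p - q) - (s + r) * (s - r)) / (q * (s - r))"
        unfolding h using q(1) sr by (simp add: field_simps)
      also have "p * (p - q) - (s + r) * (s - r) = q * (q - p)"
        using p(2) q(2) by (simp add: algebra_simps power2_eq_square)
      also have "q * (q - p) / (q * (s - r)) = q / (s - r) - p / (s - r)"
        using q(1) by (simp add: diff_divide_distrib)
      finally show ?thesis .
    qed
    ultimately show ?thesis
      by (simp add: q_def)
  qed
  have G_cont: "continuous_on {-1..1} G"
    unfolding G_def using N_pos
    by (auto intro!: continuous_intros continuous_on_arcsin
             simp: N_def abs_square_le_1 less_imp_neq[symmetric])
  \<comment> \<open>The logarithmic singularity of F at r is symmetric, so it cancels in the principal value.\<close>
  define F where "F s = G s + p * ln \<bar>s - r\<bar>" for s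
  have "has_cpv_integral (\<lambda>s. sqrt (1 - s\<^sup>2) / (s - r)) (-1) 1 r (F 1 - F (-1) + 0)"
  proof (rule has_cpv_integral_antiderivative)
    show "continuous_on ({-1..1} - {r}) F"
      unfolding F_def by (intro continuous_intros continuous_on_subset[OF G_cont]) auto
    show "(F has_real_derivative sqrt (1 - s\<^sup>2) / (s - r)) (at s)" if "s \<in> {-1<..<1} - {r}" for s
    proof -
      have "(F has_real_derivative (sqrt (1 - s\<^sup>2) / (s - r) - p / (s - r)) + p * (1 / (s - r) * 1)) (at s)"
        unfolding F_def using that
        by (intro DERIV_add DERIV_cmult G_deriv DERIV_chain2[OF DERIV_ln_abs]) (auto intro!: derivative_eq_intros)
      then show ?thesis by simp
    qed
    have "isCont G r"
      using r G_cont by (intro continuous_on_interior[of "{-1..1}"]) (auto simp: interior_atLeastAtMost_real)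
    then have "((\<lambda>e. G (r - e) - G (r + e)) \<longlongrightarrow> G r - G r) (at_right 0)"
      by (auto elim!: isCont_tendsto_compose intro!: tendsto_eq_intros)
    then show "((\<lambda>e. F (r - e) - F (r + e)) \<longlongrightarrow> 0) (at_right 0)"
      by (simp add: F_def)
  qed (use r in auto)
  moreover have "F 1 - F (-1) + 0 = - pi * r"
    using r by (auto simp: F_def G_def N_def abs_if)
  ultimately show ?thesis by simp
qed

lemma has_cpv_integral_mult_var:
  assumes "(g has_integral K) {a..b}" "has_cpv_integral (\<lambda>s. g s / (s - c)) a b c J"
    and "a < c" "c < b"
  shows "has_cpv_integral (\<lambda>s. s * g s / (s - c)) a b c (K + c * J)"
proof -
  have "has_cpv_integral (\<lambda>s. g s + c * (g s / (s - c))) a b c (K + c * J)"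
    using has_integral_imp_has_cpv_integral[OF assms(1,3,4)] has_cpv_integral_cmult[OF assms(2)]
    by (rule has_cpv_integral_add)
  then show ?thesis
    by (rule has_cpv_integral_cong) (use assms(3,4) in \<open>auto simp: field_simps\<close>)
qed

lemma has_cpv_integral_cheb_T_sqrt_Suc_Suc:
  assumes r: "\<bar>r\<bar> < 1"
    and a: "has_cpv_integral (\<lambda>s. cheb_T (Suc n) s * sqrt (1 - s\<^sup>2) / (s - r)) (-1) 1 r a"
    and b: "has_cpv_integral (\<lambda>s. cheb_T n s * sqrt (1 - s\<^sup>2) / (s - r)) (-1) 1 r b"
  shows "has_cpv_integral (\<lambda>s. cheb_T (Suc (Suc n)) s * sqrt (1 - s\<^sup>2) / (s - r)) (-1) 1 r
           (2 * ((if n = 1 then -pi/4 else 0) + r * a) - b)"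
proof -
  have "has_cpv_integral (\<lambda>s. s * (cheb_T (Suc n) s * sqrt (1 - s\<^sup>2)) / (s - r)) (-1) 1 r
          ((if n = 1 then -pi/4 else 0) + r * a)"
    using has_cpv_integral_mult_var[OF has_integral_cheb_T_sqrt[of "Suc n"]] a r by auto
  then have "has_cpv_integral (\<lambda>s. 2 * (s * (cheb_T (Suc n) s * sqrt (1 - s\<^sup>2)) / (s - r)) +
                 (-1) * (cheb_T n s * sqrt (1 - s\<^sup>2) / (s - r))) (-1) 1 r
               (2 * ((if n = 1 then -pi/4 else 0) + r * a) + (-1) * b)"
    by (intro has_cpv_integral_add has_cpv_integral_cmult b)
  then have "has_cpv_integral (\<lambda>s. cheb_T (Suc (Suc n)) s * sqrt (1 - s\<^sup>2) / (s - r)) (-1) 1 r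
               (2 * ((if n = 1 then -pi/4 else 0) + r * a) + (-1) * b)"
    by (rule has_cpv_integral_cong) (use r in \<open>auto simp: cheb_T_Suc_Suc algebra_simps diff_divide_distrib\<close>)
  then show ?thesis by simp
qed

lemma has_cpv_integral_cheb_T_sqrt:
  assumes r: "\<bar>r\<bar> < 1" and n: "n \<ge> 2"
  shows "has_cpv_integral (\<lambda>s. cheb_T n s * sqrt (1 - s\<^sup>2) / (s - r)) (-1) 1 r
           (pi/2 * (cheb_T (n - 1) r - cheb_T (n + 1) r))"
proof -
  define J where "J n I \<longleftrightarrow> has_cpv_integral (\<lambda>s. cheb_T n s * sqrt (1 - s\<^sup>2) / (s - r)) (-1) 1 r I"
    for n I
  define V where "V n = pi/2 * (cheb_T (n - 1) r - cheb_T (n + 1) r)" for n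
  have r1: "\<bar>r\<bar> \<le> 1" using r by simp
  have J0: "J 0 (- pi * r)"
    unfolding J_def by (rule has_cpv_integral_cong[OF has_cpv_integral_sqrt_one_minus_sq[OF r]])
                       (use r in auto)
  have "((\<lambda>s. sqrt (1 - s\<^sup>2)) has_integral pi/2) {-1..1}"
    using has_integral_cheb_T_sqrt[of 0] by simp
  then have "has_cpv_integral (\<lambda>s. s * sqrt (1 - s\<^sup>2) / (s - r)) (-1) 1 r (pi/2 + r * (- pi * r))"
    using has_cpv_integral_sqrt_one_minus_sq[OF r] r by (intro has_cpv_integral_mult_var) auto
  then have J1: "J (Suc 0) (pi/2 + r * (- pi * r))"
    unfolding J_def by (rule has_cpv_integral_cong) (use r in \<open>auto simp: cheb_T_Suc_0 abs_le_iff\<close>)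
  have "J (Suc (Suc k)) (V (Suc (Suc k))) \<and> J (Suc (Suc (Suc k))) (V (Suc (Suc (Suc k))))" for k
  proof (induction k)
    case 0
    have J2: "J (Suc (Suc 0)) (V (Suc (Suc 0)))"
      using has_cpv_integral_cheb_T_sqrt_Suc_Suc[OF r J1[unfolded J_def] J0[unfolded J_def]]
      by (simp add: J_def V_def cheb_T_Suc_Suc[OF r1] cheb_T_Suc_0[OF r1] algebra_simps)
    then have "J (Suc (Suc (Suc 0))) (V (Suc (Suc (Suc 0))))"
      using has_cpv_integral_cheb_T_sqrt_Suc_Suc[OF r J2[unfolded J_def] J1[unfolded J_def]]
      by (simp add: J_def V_def cheb_T_Suc_Suc[OF r1] cheb_T_Suc_0[OF r1] algebra_simps)
    with J2 show ?case by simp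
  next
    case (Suc k)
    then have "J (Suc (Suc (Suc (Suc k)))) (2 * (0 + r * V (Suc (Suc (Suc k)))) - V (Suc (Suc k)))"
      using has_cpv_integral_cheb_T_sqrt_Suc_Suc[OF r, of "Suc (Suc k)"] by (simp add: J_def)
    moreover have "2 * (0 + r * V (Suc (Suc (Suc k)))) - V (Suc (Suc k)) = V (Suc (Suc (Suc (Suc k))))"
      by (simp add: V_def cheb_T_Suc_Suc[OF r1] algebra_simps)
    ultimately show ?case using Suc by simp
  qed
  moreover have "n = Suc (Suc (n - 2))"
    using n by simp
  ultimately show ?thesis
    unfolding J_def V_def by metis
qed

lemma powr_Suc_minus_half:
  assumes "0 \<le> (x::real)"
  shows "x powr (real (Suc m) - 1/2) = x * x powr (real m - 1/2)"
proof -
  have "real (Suc m) - 1/2 = 1 + (real m - 1/2)" by simp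
  then show ?thesis using assms by (simp only: powr_add powr_one)
qed

lemma has_cpv_integral_cheb_T_powr_Suc:
  assumes r: "\<bar>r\<bar> < 1"
    and A: "has_cpv_integral (\<lambda>s. cheb_T k s * (1 - s\<^sup>2) powr (real m - 1/2) / (s - r)) (-1) 1 r A"
    and B: "has_cpv_integral (\<lambda>s. cheb_T (k + 2) s * (1 - s\<^sup>2) powr (real m - 1/2) / (s - r)) (-1) 1 r B"
    and C: "has_cpv_integral (\<lambda>s. cheb_T (k + 4) s * (1 - s\<^sup>2) powr (real m - 1/2) / (s - r)) (-1) 1 r C"
  shows "has_cpv_integral (\<lambda>s. cheb_T (k + 2) s * (1 - s\<^sup>2) powr (real (Suc m) - 1/2) / (s - r))
           (-1) 1 r (B/2 - C/4 - A/4)"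
proof -
  have "has_cpv_integral
          (\<lambda>s. (1/2) * (cheb_T (k + 2) s * (1 - s\<^sup>2) powr (real m - 1/2) / (s - r)) +
               (-1/4) * (cheb_T (k + 4) s * (1 - s\<^sup>2) powr (real m - 1/2) / (s - r)) +
               (-1/4) * (cheb_T k s * (1 - s\<^sup>2) powr (real m - 1/2) / (s - r)))
          (-1) 1 r ((1/2) * B + (-1/4) * C + (-1/4) * A)"
    by (intro has_cpv_integral_add has_cpv_integral_cmult A B C)
  then have "has_cpv_integral (\<lambda>s. cheb_T (k + 2) s * (1 - s\<^sup>2) powr (real (Suc m) - 1/2) / (s - r))
               (-1) 1 r ((1/2) * B + (-1/4) * C + (-1/4) * A)"
  proof (rule has_cpv_integral_cong)
    fix s :: real
    assume "s \<in> {-1..1}"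
    then have s: "\<bar>s\<bar> \<le> 1" by auto
    then have x: "0 \<le> 1 - s\<^sup>2" by (simp add: abs_square_le_1)
    have "cheb_T (k + 2) s * (1 - s\<^sup>2) powr (real (Suc m) - 1/2) =
               ((1 - s\<^sup>2) * cheb_T (k + 2) s) * (1 - s\<^sup>2) powr (real m - 1/2)"
      by (simp only: powr_Suc_minus_half[OF x] mult_ac)
    also have "\<dots> = (2 * cheb_T (k + 2) s - cheb_T (k + 4) s - cheb_T k s) / 4 * (1 - s\<^sup>2) powr (real m - 1/2)"
      by (simp only: one_minus_sq_mult_cheb_T[OF s])
    finally have eq: "cheb_T (k + 2) s * (1 - s\<^sup>2) powr (real (Suc m) - 1/2) =
      (2 * cheb_T (k + 2) s - cheb_T (k + 4) s - cheb_T k s) / 4 * (1 - s\<^sup>2) powr (real m - 1/2)" .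
    show "(1/2) * (cheb_T (k + 2) s * (1 - s\<^sup>2) powr (real m - 1/2) / (s - r)) +
               (-1/4) * (cheb_T (k + 4) s * (1 - s\<^sup>2) powr (real m - 1/2) / (s - r)) +
               (-1/4) * (cheb_T k s * (1 - s\<^sup>2) powr (real m - 1/2) / (s - r)) =
               cheb_T (k + 2) s * (1 - s\<^sup>2) powr (real (Suc m) - 1/2) / (s - r)"
      unfolding eq by (simp add: algebra_simps add_divide_distrib diff_divide_distrib)
  qed (use r in auto)
  then show ?thesis by simp
qed

lemma sum_alternating_binomial_Suc:
  fixes f :: "nat \<Rightarrow> 'a::comm_ring_1"
  shows "(\<Sum>j\<le>Suc k. (-1)^j * of_nat (Suc k choose j) * f j) =
         (\<Sum>j\<le>k. (-1)^j * of_nat (k choose j) * (f j - f (Suc j)))"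
proof -
  define a where "a j = (-1)^j * of_nat (k choose j) * f j" for j
  have "(\<Sum>j\<le>Suc k. (-1)^j * of_nat (Suc k choose j) * f j) =
        f 0 + (\<Sum>j\<le>k. (-1)^Suc j * of_nat (Suc k choose Suc j) * f (Suc j))"
    by (subst sum.atMost_Suc_shift) simp
  also have "(\<Sum>j\<le>k. (-1)^Suc j * of_nat (Suc k choose Suc j) * f (Suc j)) =
             (\<Sum>j\<le>k. a (Suc j)) - (\<Sum>j\<le>k. (-1)^j * of_nat (k choose j) * f (Suc j))"
    unfolding a_def sum_subtractf[symmetric] by (rule sum.cong) (auto simp: algebra_simps)
  also have "(\<Sum>j\<le>k. a (Suc j)) = (\<Sum>j\<le>k. a j) - f 0"
    using sum.atMost_Suc_shift[of a k] by (simp add: a_def binomial_eq_0)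
  finally show ?thesis
    by (simp add: a_def sum_subtractf algebra_simps binomial_eq_0)
qed

definition cheb_pv_value :: "nat \<Rightarrow> nat \<Rightarrow> real \<Rightarrow> real" where
  "cheb_pv_value m n r = pi * (-1) ^ (m + 1) * (1/2) ^ (2 * m - 1) *
     (\<Sum>j = 0..2 * m - 1. (-1) ^ j * real ((2 * m - 1) choose j) * cheb_T (n + 1 - 2 * m + 2 * j) r)"

lemma cheb_pv_value_1:
  assumes "n \<ge> 2"
  shows "cheb_pv_value 1 n r = pi/2 * (cheb_T (n - 1) r - cheb_T (n + 1) r)"
  using assms by (simp add: cheb_pv_value_def algebra_simps)

lemma cheb_pv_value_Suc:
  assumes "m \<ge> 1" "2 * m \<le> k"
  shows "cheb_pv_value (Suc m) (k + 2) r =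
           cheb_pv_value m (k + 2) r / 2 - cheb_pv_value m (k + 4) r / 4 - cheb_pv_value m k r / 4"
proof -
  define K where "K = 2 * m - 1"
  define a where "a = k + 1 - 2 * m"
  define S where "S b = (\<Sum>j\<le>K. (-1) ^ j * real (K choose j) * cheb_T (b + 2 * j) r)" for b
  define c where "c = pi * (-1) ^ (m + 1) * (1/2) ^ K"
  have K: "2 * Suc m - 1 = Suc (Suc K)" using assms(1) by (simp add: K_def)
  define S' where "S' = (\<Sum>j\<le>Suc (Suc K). (-1) ^ j * real (Suc (Suc K) choose j) * cheb_T (a + 2 * j) r)"
  have S'_eq: "S' = S a - 2 * S (a + 2) + S (a + 4)"
  proof -
    have "S' = (\<Sum>j\<le>K. (-1) ^ j * real (K choose j) *
                 ((cheb_T (a + 2 * j) r - cheb_T (a + 2 * Suc j) r) -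
                  (cheb_T (a + 2 * Suc j) r - cheb_T (a + 2 * Suc (Suc j)) r)))"
      unfolding S'_def by (simp only: sum_alternating_binomial_Suc)
    also have "\<dots> = S a - 2 * S (a + 2) + S (a + 4)"
      unfolding S_def sum_distrib_left sum_subtractf[symmetric] sum.distrib[symmetric]
      by (intro sum.cong) (auto simp: algebra_simps eval_nat_numeral)
    finally show ?thesis .
  qed
  have scaled: "cheb_pv_value m n r = c * S (n + 1 - 2 * m)" for n
    by (simp add: cheb_pv_value_def c_def S_def K_def atLeast0AtMost)
  have scaled_Suc: "cheb_pv_value (Suc m) (k + 2) r = - c / 4 * S'"
  proof -
    have idx: "k + 2 + 1 - 2 * Suc m = a" using assms by (simp add: a_def)
    show ?thesis
      unfolding cheb_pv_value_def K atLeast0AtMost idx S'_def[symmetric] by (simp add: c_def)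
  qed
  have "k + 2 + 1 - 2 * m = a + 2" "k + 4 + 1 - 2 * m = a + 4" "k + 1 - 2 * m = a"
    using assms by (simp_all add: a_def)
  then show ?thesis
    unfolding scaled_Suc S'_eq scaled by (simp add: algebra_simps)
qed

theorem mainTheorem1:
  fixes m n :: nat and r :: real
  assumes "m \<ge> 1" and "n \<ge> 2 * m" and "\<bar>r\<bar> < 1"
  shows "has_cpv_integral
           (\<lambda>s. cheb_T n s * (1 - s\<^sup>2) powr (real m - 1/2) / (s - r)) (-1) 1 r
           (pi * (-1) ^ (m + 1) * (1/2) ^ (2 * m - 1) *
             (\<Sum>j = 0..2 * m - 1. (-1) ^ j * real ((2 * m - 1) choose j) * cheb_T (n + 1 - 2 * m + 2 * j) r))"
proof -
  note r = \<open>\<bar>r\<bar> < 1\<close>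
  have "has_cpv_integral (\<lambda>s. cheb_T n s * (1 - s\<^sup>2) powr (real m - 1/2) / (s - r)) (-1) 1 r
          (cheb_pv_value m n r)"
    using assms(1,2)
  proof (induction m arbitrary: n rule: nat_induct_at_least)
    case base
    then have "n \<ge> 2" by simp
    then have "has_cpv_integral (\<lambda>s. cheb_T n s * sqrt (1 - s\<^sup>2) / (s - r)) (-1) 1 r (cheb_pv_value 1 n r)"
      unfolding cheb_pv_value_1[OF \<open>n \<ge> 2\<close>] by (rule has_cpv_integral_cheb_T_sqrt[OF r])
    then show ?case
      by (rule has_cpv_integral_cong) (use r in \<open>auto simp: powr_half_sqrt abs_square_le_1\<close>)
  next
    case (Suc m)
    define k where "k = n - 2"
    have n: "n = k + 2" and k: "2 * m \<le> k"
      using Suc.prems by (simp_all add: k_def)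
    show ?case
      using has_cpv_integral_cheb_T_powr_Suc[OF r Suc.IH[of k] Suc.IH[of "k + 2"] Suc.IH[of "k + 4"]]
            cheb_pv_value_Suc[OF Suc.hyps k] k
      by (simp add: n)
  qed
  then show ?thesis
    unfolding cheb_pv_value_def .
qed

end
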